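(* For every knot type $[K]$, $2\,\mathrm{br}[K]+1\le \mathrm{pl}[K]$.
   Context: For a conformation $K$ of a knot (an embedded closed curve in $\mathbb{R}^3$ in the knot type) and a direction $p\in S^2$, let $\mathrm{br}(K,p)$ be the number of local maxima of $K$ with respect to the height function in direction $p$, where an extremum occurring along an interval of constant height is counted as a single extremum. The bridge index is $\mathrm{br}[K]=\min_{K\in[K]}\min_{p\in S^2}\mathrm{br}(K,p)$. A planar stick diagram of $[K]$ is a closed polygonal curve in the plane (finitely many straight line segments, called edges, joined end to end), whose self-intersections are transverse double points in the interiors of edges, with over/under crossing information at each self-intersection, representing $[K]$. The planar stick index $\mathrm{pl}[K]$ is the smallest number of edges in any planar stick diagram of $[K]$. *)

theory Defs
  imports "HOL-Analysis.Analysis" "HOL-Library.Extended_Nat"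
begin

definition is_knot :: "(real^3) set \<Rightarrow> bool" where
  "is_knot K \<longleftrightarrow> (\<exists>g. simple_path g \<and> pathfinish g = pathstart g \<and> path_image g = K)"

definition ambient_isotopic :: "(real^3) set \<Rightarrow> (real^3) set \<Rightarrow> bool" where
  "ambient_isotopic A B \<longleftrightarrow>
     (\<exists>H :: real \<times> (real^3) \<Rightarrow> real^3.
        continuous_on ({0..1} \<times> UNIV) H \<and>
        (\<forall>t\<in>{0..1}. \<exists>G. homeomorphism UNIV UNIV (\<lambda>x. H (t, x)) G) \<and>
        (\<forall>x. H (0, x) = x) \<and>
        (\<lambda>x. H (1, x)) ` A = B)"

definition same_knot_type :: "(real^3) set \<Rightarrow> (real^3) set \<Rightarrow> bool" where
  "same_knot_type K K' \<longleftrightarrow> is_knot K' \<and> ambient_isotopic K K'"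

text \<open>Local maxima of the height function x \<mapsto> p \<bullet> x on K; a maximum attained along an
  interval of constant height is counted once: a local maximum is a connected component C of
  a level set of the height on K such that all points of K in some neighbourhood of C are
  no higher than C.\<close>
definition local_max_sets :: "(real^3) set \<Rightarrow> real^3 \<Rightarrow> (real^3) set set" where
  "local_max_sets K p =
     {C. \<exists>c. C \<in> components (K \<inter> {x. p \<bullet> x = c}) \<and>
            (\<exists>U. open U \<and> C \<subseteq> U \<and> (\<forall>x\<in>K \<inter> U. p \<bullet> x \<le> c))}"

definition br :: "(real^3) set \<Rightarrow> real^3 \<Rightarrow> enat" where
  "br K p = (if finite (local_max_sets K p) then enat (card (local_max_sets K p)) else \<infinity>)"

definition bridge_index :: "(real^3) set \<Rightarrow> enat" where
  "bridge_index K = (INF K'\<in>{K'. same_knot_type K K'}. INF p\<in>sphere 0 1. br K' p)"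

text \<open>The closed polygonal curve in the plane with vertex list vs (edge i joins vs!i to
  vs!((i+1) mod n)), parametrised on [0,1] with edge i traversed for t \<in> [i/n,(i+1)/n].\<close>
definition stick_curve :: "(real^2) list \<Rightarrow> real \<Rightarrow> real^2" where
  "stick_curve vs t =
     (let n = length vs; u = t * real n; i = min (nat \<lfloor>u\<rfloor>) (n - 1); s = u - real i
      in (1 - s) *\<^sub>R vs ! i + s *\<^sub>R vs ! ((i + 1) mod n))"

definition edge_vec :: "(real^2) list \<Rightarrow> nat \<Rightarrow> real^2" where
  "edge_vec vs i = vs ! ((i + 1) mod length vs) - vs ! i"

definition stick_edge_index :: "(real^2) list \<Rightarrow> real \<Rightarrow> nat" where
  "stick_edge_index vs t = nat \<lfloor>t * real (length vs)\<rfloor>"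

definition double_pair :: "(real^2) list \<Rightarrow> real \<Rightarrow> real \<Rightarrow> bool" where
  "double_pair vs s t \<longleftrightarrow> s \<in> {0..<1} \<and> t \<in> {0..<1} \<and> s \<noteq> t \<and> stick_curve vs s = stick_curve vs t"

text \<open>A planar stick diagram (without crossing data): a nonempty closed polygon of genuine
  (nondegenerate) edges whose self-intersections are transverse double points lying in the
  interiors of edges.\<close>
definition stick_polygon :: "(real^2) list \<Rightarrow> bool" where
  "stick_polygon vs \<longleftrightarrow> vs \<noteq> [] \<and>
     (\<forall>i<length vs. edge_vec vs i \<noteq> 0) \<and>
     (\<forall>s t. double_pair vs s t \<longrightarrow>
        s * real (length vs) \<notin> \<int> \<and> t * real (length vs) \<notin> \<int> \<and>
        (let d = edge_vec vs (stick_edge_index vs s); e = edge_vec vs (stick_edge_index vs t)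
         in d $ 1 * e $ 2 - d $ 2 * e $ 1 \<noteq> 0) \<and>
        (\<forall>r\<in>{0..<1}. stick_curve vs r = stick_curve vs s \<longrightarrow> r = s \<or> r = t))"

text \<open>Crossing information: at every double point (parameters s, t), over s t says that the
  strand through parameter s is the over-strand; exactly one of the two strands is over.\<close>
definition crossing_info :: "(real^2) list \<Rightarrow> (real \<Rightarrow> real \<Rightarrow> bool) \<Rightarrow> bool" where
  "crossing_info vs over \<longleftrightarrow> (\<forall>s t. double_pair vs s t \<longrightarrow> (over s t \<longleftrightarrow> \<not> over t s))"

text \<open>The diagram (vs, over) represents the knot type of K: it lifts (adding a height
  coordinate, consistent with the crossing information) to a knot in the knot type of K
  whose projection to the plane of the first two coordinates is the diagram.\<close>
definition represents :: "(real^2) list \<Rightarrow> (real \<Rightarrow> real \<Rightarrow> bool) \<Rightarrow> (real^3) set \<Rightarrow> bool" where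
  "represents vs over K \<longleftrightarrow>
     (\<exists>z :: real \<Rightarrow> real.
        continuous_on {0..1} z \<and> z 0 = z 1 \<and>
        (\<forall>s t. double_pair vs s t \<longrightarrow> over s t \<longrightarrow> z s > z t) \<and>
        (let g = (\<lambda>t. vector [stick_curve vs t $ 1, stick_curve vs t $ 2, z t] :: real^3)
         in simple_path g \<and> pathfinish g = pathstart g \<and> same_knot_type K (path_image g)))"

definition planar_stick_index :: "(real^3) set \<Rightarrow> enat" where
  "planar_stick_index K =
     (INF n\<in>{n. \<exists>vs over. length vs = n \<and> stick_polygon vs \<and> crossing_info vs over
                          \<and> represents vs over K}. enat n)"

end

theory Submission
  imports Defs
begin

text \<open>
  Let a planar stick diagram with \<open>n\<close> edges lift to a conformation of the knot, and measure height
  in the horizontal direction \<open>p\<close> orthogonal to the first edge. This height only sees the planar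
  curve, so it is piecewise linear with breakpoints at the vertices, and the first edge is flat.
  Every local maximum contains a vertex; walking from it along flat edges, one reaches a
  falling edge whose nearest non-flat predecessor is a rising edge. Distinct maxima give distinct
  such falling edges, their rising predecessors are distinct as well, and together with the flat
  first edge this exhibits \<open>2 br(K, p) + 1\<close> distinct edges.
\<close>

text \<open>\<open>H k\<close> is the height of vertex \<open>k\<close> of a closed polygon with \<open>n\<close> vertices, whose edge \<open>k\<close>
  joins vertex \<open>k\<close> to vertex \<open>(k + 1) mod n\<close>.\<close>

locale cyclic_profile =
  fixes H :: "nat \<Rightarrow> real" and n :: nat
  assumes n_pos: "0 < n"
begin

definition flat_edge :: "nat \<Rightarrow> bool" where
  "flat_edge k \<longleftrightarrow> H ((k + 1) mod n) = H k"

definition rising_edge :: "nat \<Rightarrow> bool" where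
  "rising_edge k \<longleftrightarrow> H k < H ((k + 1) mod n)"

definition falling_edge :: "nat \<Rightarrow> bool" where
  "falling_edge k \<longleftrightarrow> H ((k + 1) mod n) < H k"

lemma edge_cases: "flat_edge k \<or> rising_edge k \<or> falling_edge k"
  unfolding flat_edge_def rising_edge_def falling_edge_def by linarith

definition flat_run :: "nat \<Rightarrow> nat \<Rightarrow> bool" where
  "flat_run k d \<longleftrightarrow> (\<forall>e<d. flat_edge ((k + e) mod n))"

text \<open>The edges by which the polygon leaves a local maximum: falling edges preceded, across a
  possibly empty run of flat edges, by a rising edge.\<close>

definition peak_edges :: "nat set" where
  "peak_edges = {i. i < n \<and> falling_edge i \<and>
     (\<exists>a d. a < n \<and> rising_edge a \<and> flat_run (Suc a) d \<and> i = (Suc a + d) mod n)}"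

lemma ascent_nearby:
  assumes s: "0 \<le> s" "s \<le> 1" and "0 < \<delta>"
    and ascent: "(s < 1 \<and> rising_edge k) \<or> (0 < s \<and> falling_edge k)"
  obtains s' where "s' \<in> {0..1}" "dist s' s < \<delta>" "0 < (s' - s) * (H ((k + 1) mod n) - H k)"
proof -
  have "\<exists>s'\<in>{0..1}. dist s' s < \<delta> \<and> 0 < (s' - s) * (H ((k + 1) mod n) - H k)"
    using ascent
  proof
    assume up: "s < 1 \<and> rising_edge k"
    define h where "h = min (\<delta> / 2) (1 - s)"
    have "0 < h" "h < \<delta>" "h \<le> 1 - s" using up \<open>0 < \<delta>\<close> unfolding h_def by auto
    then show ?thesis using s up unfolding rising_edge_def
      by (intro bexI[of _ "s + h"]) (auto simp: dist_real_def zero_less_mult_iff)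
  next
    assume down: "0 < s \<and> falling_edge k"
    define h where "h = min (\<delta> / 2) s"
    have "0 < h" "h < \<delta>" "h \<le> s" using down \<open>0 < \<delta>\<close> unfolding h_def by auto
    then show ?thesis using s down unfolding falling_edge_def
      by (intro bexI[of _ "s - h"]) (auto simp: dist_real_def mult_pos_neg)
  qed
  then show thesis using that by blast
qed

lemma flat_run_end_unique:
  assumes "flat_run k d1" "flat_run k d2"
    and "\<not> flat_edge ((k + d1) mod n)" "\<not> flat_edge ((k + d2) mod n)"
  shows "d1 = d2"
  using assms unfolding flat_run_def by (metis linorder_neqE_nat)

lemma flat_run_invariant:
  assumes step: "\<And>k. k < n \<Longrightarrow> flat_edge k \<Longrightarrow> Q k \<longleftrightarrow> Q ((k + 1) mod n)"
    and run: "flat_run k d"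
  shows "Q (k mod n) \<longleftrightarrow> Q ((k + d) mod n)"
  using run
proof (induction d)
  case 0
  then show ?case by simp
next
  case (Suc d)
  then have "flat_run k d" "flat_edge ((k + d) mod n)"
    unfolding flat_run_def by auto
  then show ?case
    using Suc.IH step[of "(k + d) mod n"] n_pos by (simp add: mod_Suc_eq)
qed

lemma nonflat_edge_after:
  assumes "k < n" and "\<exists>m<n. \<not> flat_edge m"
  obtains d where "flat_run k d" "\<not> flat_edge ((k + d) mod n)"
proof -
  obtain m where m: "m < n" "\<not> flat_edge m" using assms(2) by blast
  have "(k + (m + n - k)) mod n = m" using assms(1) m(1) by simp
  then have ex: "\<exists>d. \<not> flat_edge ((k + d) mod n)" using m(2) by metis
  define d where "d = (LEAST d. \<not> flat_edge ((k + d) mod n))"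
  have "flat_run k d" unfolding flat_run_def d_def using not_less_Least by blast
  moreover have "\<not> flat_edge ((k + d) mod n)" unfolding d_def using LeastI_ex[OF ex] .
  ultimately show thesis using that by blast
qed

lemma nonflat_edge_before:
  assumes i: "i < n" "\<not> flat_edge i"
  obtains a d where "a < n" "\<not> flat_edge a" "flat_run (Suc a) d" "i = (Suc a + d) mod n"
proof -
  define P where "P b \<longleftrightarrow> 0 < b \<and> \<not> flat_edge ((i + n - b) mod n)" for b
  have Pn: "P n" unfolding P_def using i n_pos by simp
  define b where "b = (LEAST b. P b)"
  have Pb: "P b" unfolding b_def using LeastI[of P, OF Pn] .
  have bn: "b \<le> n" unfolding b_def using Least_le[of P, OF Pn] .
  define a where "a = (i + n - b) mod n"
  have "a < n" unfolding a_def using n_pos by simp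
  moreover have "\<not> flat_edge a" using Pb unfolding P_def a_def by simp
  moreover have "flat_run (Suc a) (b - 1)"
    unfolding flat_run_def
  proof (intro allI impI)
    fix e assume e: "e < b - 1"
    have "(Suc a + e) mod n = (i + n - b + Suc e) mod n"
      unfolding a_def by (metis add_Suc_shift mod_add_left_eq)
    also have "i + n - b + Suc e = i + n - (b - Suc e)" using e bn by simp
    finally have "(Suc a + e) mod n = (i + n - (b - Suc e)) mod n" .
    moreover have "\<not> P (b - Suc e)"
      using not_less_Least[of "b - Suc e" P] e unfolding b_def by linarith
    ultimately show "flat_edge ((Suc a + e) mod n)" using e unfolding P_def by simp
  qed
  moreover have "i = (Suc a + (b - 1)) mod n"
  proof -
    have "Suc a + (b - 1) = ((i + n - b) mod n) + b" using Pb unfolding a_def P_def by simp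
    then have "(Suc a + (b - 1)) mod n = (i + n - b + b) mod n" by (simp add: mod_add_left_eq)
    also have "\<dots> = i" using bn i by simp
    finally show ?thesis by simp
  qed
  ultimately show thesis using that by blast
qed

lemma peak_edge_in_invariant_set:
  assumes "j < n" "Q j" and nonflat: "\<exists>m<n. \<not> flat_edge m"
    and step: "\<And>k. k < n \<Longrightarrow> flat_edge k \<Longrightarrow> Q k \<longleftrightarrow> Q ((k + 1) mod n)"
    and no_rise: "\<And>k. k < n \<Longrightarrow> Q k \<Longrightarrow> \<not> rising_edge k"
    and no_fall: "\<And>k. k < n \<Longrightarrow> Q ((k + 1) mod n) \<Longrightarrow> \<not> falling_edge k"
  shows "\<exists>i\<in>peak_edges. Q i"
proof -
  obtain d where run: "flat_run j d" and i: "\<not> flat_edge ((j + d) mod n)"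
    using nonflat_edge_after[OF \<open>j < n\<close> nonflat] .
  define i where "i = (j + d) mod n"
  have i_lt: "i < n" unfolding i_def using n_pos by simp
  have Qi: "Q i" using flat_run_invariant[where Q = Q, OF step run] \<open>j < n\<close> \<open>Q j\<close> unfolding i_def by simp
  then have falling: "falling_edge i" using edge_cases i no_rise[OF i_lt] unfolding i_def by blast
  obtain a d' where a: "a < n" "\<not> flat_edge a" and run': "flat_run (Suc a) d'"
    and i_eq: "i = (Suc a + d') mod n"
    using nonflat_edge_before[OF i_lt] i unfolding i_def by blast
  have "Q (Suc a mod n)" using flat_run_invariant[where Q = Q, OF step run'] Qi i_eq by simp
  then have "rising_edge a" using edge_cases a no_fall[OF a(1)] by auto
  then have "i \<in> peak_edges" unfolding peak_edges_def using i_lt falling a(1) run' i_eq by blast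
  then show ?thesis using Qi by blast
qed

lemma card_peak_edges:
  assumes "flat_edge 0"
  shows "2 * card peak_edges + 1 \<le> n"
proof -
  have "\<forall>i\<in>peak_edges. \<exists>a. a < n \<and> rising_edge a \<and> (\<exists>d. flat_run (Suc a) d \<and> i = (Suc a + d) mod n)"
    unfolding peak_edges_def by blast
  from bchoice[OF this] obtain rise where rise: "\<forall>i\<in>peak_edges. rise i < n \<and> rising_edge (rise i) \<and>
      (\<exists>d. flat_run (Suc (rise i)) d \<and> i = (Suc (rise i) + d) mod n)"
    by blast
  have inj: "inj_on rise peak_edges"
  proof (rule inj_onI)
    fix i1 i2 assume i: "i1 \<in> peak_edges" "i2 \<in> peak_edges" "rise i1 = rise i2"
    obtain d1 where d1: "flat_run (Suc (rise i1)) d1" "i1 = (Suc (rise i1) + d1) mod n"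
      using rise i(1) by blast
    obtain d2 where d2: "flat_run (Suc (rise i1)) d2" "i2 = (Suc (rise i1) + d2) mod n"
      using rise i(2) unfolding i(3) by blast
    have "\<not> flat_edge i1" "\<not> flat_edge i2"
      using i(1,2) unfolding peak_edges_def flat_edge_def falling_edge_def by auto
    then have "d1 = d2" using flat_run_end_unique[OF d1(1) d2(1)] d1(2) d2(2) by simp
    then show "i1 = i2" using d1(2) d2(2) by simp
  qed
  have peaks: "peak_edges \<subseteq> {..<n}" unfolding peak_edges_def by blast
  have "peak_edges \<inter> rise ` peak_edges = {}"
  proof (intro equals0I)
    fix i assume "i \<in> peak_edges \<inter> rise ` peak_edges"
    then have "falling_edge i" "rising_edge i" using rise unfolding peak_edges_def by auto
    then show False unfolding rising_edge_def falling_edge_def by simp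
  qed
  moreover have "0 \<notin> peak_edges"
    using assms unfolding peak_edges_def flat_edge_def falling_edge_def by simp
  moreover have "0 \<notin> rise ` peak_edges"
  proof
    assume "0 \<in> rise ` peak_edges"
    then have "rising_edge 0" using rise by auto
    then show False using assms unfolding flat_edge_def rising_edge_def by simp
  qed
  moreover have "finite peak_edges" using peaks finite_subset by blast
  ultimately have "card (insert 0 (peak_edges \<union> rise ` peak_edges)) = 2 * card peak_edges + 1"
    using card_image[OF inj] by (simp add: card_Un_disjoint)
  moreover have "insert 0 (peak_edges \<union> rise ` peak_edges) \<subseteq> {..<n}"
    using peaks rise n_pos by auto
  ultimately show ?thesis using card_mono[OF finite_lessThan] by (metis card_lessThan)
qed

end

lemma local_max_sets_overlap_eq:
  assumes "C1 \<in> local_max_sets K p" "C2 \<in> local_max_sets K p" "x \<in> C1" "x \<in> C2"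
  shows "C1 = C2"
proof -
  obtain c1 c2 where "C1 \<in> components (K \<inter> {x. p \<bullet> x = c1})" "C2 \<in> components (K \<inter> {x. p \<bullet> x = c2})"
    using assms(1,2) unfolding local_max_sets_def by blast
  moreover from this have "c1 = c2" using assms(3,4) in_components_subset by blast
  ultimately show ?thesis using assms(3,4) components_nonoverlap by blast
qed

locale piecewise_linear_height = cyclic_profile H n
  for H :: "nat \<Rightarrow> real" and n :: nat +
  fixes g :: "real \<Rightarrow> real^3" and p :: "real^3"
  assumes cont: "continuous_on {0..1} g" and closed: "g 1 = g 0"
    and height: "\<And>k s. k < n \<Longrightarrow> 0 \<le> s \<Longrightarrow> s \<le> 1 \<Longrightarrow>
      p \<bullet> g ((real k + s) / real n) = (1 - s) * H k + s * H ((k + 1) mod n)"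
begin

definition vertex :: "nat \<Rightarrow> real^3" where
  "vertex k = g (real k / real n)"

definition edge_arc :: "nat \<Rightarrow> (real^3) set" where
  "edge_arc k = (\<lambda>s. g ((real k + s) / real n)) ` {0..1}"

lemma edge_param_in_unit:
  assumes "k < n" "0 \<le> s" "s \<le> 1"
  shows "(real k + s) / real n \<in> {0..1}"
proof -
  have "real k + s \<le> real n" using assms by (simp add: of_nat_less_iff[symmetric])
  then show ?thesis using assms n_pos by (simp add: field_simps)
qed

lemma unit_param_on_edge:
  assumes "t \<in> {0..1}"
  obtains k s where "k < n" "0 \<le> s" "s \<le> 1" "t = (real k + s) / real n"
proof (cases "t = 1")
  case True
  have "real (n - 1) + 1 = real n" using n_pos by (simp add: of_nat_diff)
  then show thesis using that[of "n - 1" 1] True n_pos by simp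
next
  case False
  define k where "k = nat \<lfloor>t * real n\<rfloor>"
  define s where "s = t * real n - real k"
  have tn: "0 \<le> t * real n" "t * real n < real n" using assms False n_pos by auto
  then have k: "real k = of_int \<lfloor>t * real n\<rfloor>" unfolding k_def by simp
  have "real k < real n" "0 \<le> s" "s \<le> 1" unfolding s_def k using tn by linarith+
  moreover have "t = (real k + s) / real n" unfolding s_def using n_pos by simp
  ultimately show thesis using that by simp
qed

lemma edge_end_vertex:
  assumes "k < n"
  shows "g ((real k + 1) / real n) = vertex ((k + 1) mod n)"
proof (cases "k + 1 < n")
  case True
  then show ?thesis by (simp add: vertex_def add.commute)
next
  case False
  then have "k + 1 = n" using assms by simp
  then have "(real k + 1) / real n = 1" "(k + 1) mod n = 0" using n_pos by auto
  then show ?thesis using closed by (simp add: vertex_def)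
qed

lemma continuous_on_edge:
  assumes "k < n"
  shows "continuous_on {0..1} (\<lambda>s. g ((real k + s) / real n))"
  using edge_param_in_unit[OF assms]
  by (intro continuous_on_compose2[OF cont]) (use n_pos in \<open>auto intro!: continuous_intros\<close>)

lemma edge_arc_props:
  assumes "k < n"
  shows "connected (edge_arc k)" "edge_arc k \<subseteq> path_image g"
    and "vertex k \<in> edge_arc k" "vertex ((k + 1) mod n) \<in> edge_arc k"
    and "\<And>s. 0 \<le> s \<Longrightarrow> s \<le> 1 \<Longrightarrow> g ((real k + s) / real n) \<in> edge_arc k"
    and "flat_edge k \<Longrightarrow> edge_arc k \<subseteq> {x. p \<bullet> x = H k}"
proof -
  show "connected (edge_arc k)" unfolding edge_arc_def
    by (rule connected_continuous_image[OF continuous_on_edge[OF assms]]) simp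
  show "edge_arc k \<subseteq> path_image g"
    unfolding edge_arc_def path_image_def using edge_param_in_unit[OF assms] by auto
  show arc: "\<And>s. 0 \<le> s \<Longrightarrow> s \<le> 1 \<Longrightarrow> g ((real k + s) / real n) \<in> edge_arc k"
    unfolding edge_arc_def by (rule imageI) simp
  show "vertex k \<in> edge_arc k" using arc[of 0] by (simp add: vertex_def)
  show "vertex ((k + 1) mod n) \<in> edge_arc k" using arc[of 1] edge_end_vertex[OF assms] by simp
  show "edge_arc k \<subseteq> {x. p \<bullet> x = H k}" if "flat_edge k"
    using height[OF assms] that unfolding edge_arc_def flat_edge_def by (auto simp: algebra_simps)
qed

lemma edge_arc_in_component:
  assumes C: "C \<in> components (path_image g \<inter> {x. p \<bullet> x = c})"
    and k: "k < n" "flat_edge k" and meets: "edge_arc k \<inter> C \<noteq> {}"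
  shows "edge_arc k \<subseteq> C"
proof -
  from meets obtain x where "x \<in> edge_arc k" "x \<in> C" by blast
  then have "c = H k" using edge_arc_props(6)[OF k] in_components_subset[OF C] by blast
  then have "edge_arc k \<subseteq> path_image g \<inter> {x. p \<bullet> x = c}"
    using edge_arc_props(2)[OF k(1)] edge_arc_props(6)[OF k] by blast
  then show ?thesis
    using components_maximal[OF C edge_arc_props(1)[OF k(1)]] meets by blast
qed

lemma component_flat_edge:
  assumes C: "C \<in> components (path_image g \<inter> {x. p \<bullet> x = c})" and k: "k < n" "flat_edge k"
  shows "vertex k \<in> C \<longleftrightarrow> vertex ((k + 1) mod n) \<in> C"
  using edge_arc_in_component[OF C k] edge_arc_props(3,4)[OF k(1)] by blast

lemma edge_point_neighbourhood:
  assumes k: "k < n" and s: "0 \<le> s" "s \<le> 1" and U: "open U" "g ((real k + s) / real n) \<in> U"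
  obtains \<delta> where "0 < \<delta>"
    "\<And>s'. s' \<in> {0..1} \<Longrightarrow> dist s' s < \<delta> \<Longrightarrow> g ((real k + s') / real n) \<in> U"
proof -
  define \<phi> where "\<phi> s' = g ((real k + s') / real n)" for s'
  have "continuous_on {0..1} \<phi>" unfolding \<phi>_def using k by (rule continuous_on_edge)
  moreover obtain e where "0 < e" and ball: "ball (\<phi> s) e \<subseteq> U"
    using U open_contains_ball unfolding \<phi>_def by blast
  moreover have "s \<in> {0..1}" using s by simp
  ultimately obtain \<delta> where "0 < \<delta>"
    and close: "\<forall>s'\<in>{0..1}. dist s' s < \<delta> \<longrightarrow> dist (\<phi> s') (\<phi> s) < e"
    unfolding continuous_on_iff by blast
  have "\<phi> s' \<in> U" if "s' \<in> {0..1}" "dist s' s < \<delta>" for s'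
  proof -
    have "dist (\<phi> s') (\<phi> s) < e" using close that by blast
    then have "\<phi> s' \<in> ball (\<phi> s) e" by (simp add: dist_commute)
    then show ?thesis using ball by blast
  qed
  then show thesis using that \<open>0 < \<delta>\<close> unfolding \<phi>_def by blast
qed

lemma local_max_no_ascent:
  assumes C: "C \<in> local_max_sets (path_image g) p" and k: "k < n" and s: "0 \<le> s" "s \<le> 1"
    and on_C: "g ((real k + s) / real n) \<in> C"
    and ascent: "(s < 1 \<and> rising_edge k) \<or> (0 < s \<and> falling_edge k)"
  shows False
proof -
  obtain c U where comp: "C \<in> components (path_image g \<inter> {x. p \<bullet> x = c})"
    and U: "open U" "C \<subseteq> U" and below: "\<forall>x\<in>path_image g \<inter> U. p \<bullet> x \<le> c"
    using C unfolding local_max_sets_def by blast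
  obtain \<delta> where "0 < \<delta>"
    and near: "\<And>s'. s' \<in> {0..1} \<Longrightarrow> dist s' s < \<delta> \<Longrightarrow> g ((real k + s') / real n) \<in> U"
    using edge_point_neighbourhood[OF k s U(1)] on_C U(2) by blast
  obtain s' where s': "s' \<in> {0..1}" "dist s' s < \<delta>"
    and higher: "0 < (s' - s) * (H ((k + 1) mod n) - H k)"
    using ascent_nearby[OF s \<open>0 < \<delta>\<close> ascent] .
  have "g ((real k + s') / real n) \<in> path_image g"
    unfolding path_image_def using edge_param_in_unit[OF k] s'(1) by auto
  then have "p \<bullet> g ((real k + s') / real n) \<le> c" using below near[OF s'] by blast
  moreover have "p \<bullet> g ((real k + s) / real n) = c" using in_components_subset[OF comp] on_C by blast
  ultimately show False
    using higher height[OF k s] height[OF k, of s'] s'(1) by (simp add: algebra_simps)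
qed

lemma local_max_contains_vertex:
  assumes C: "C \<in> local_max_sets (path_image g) p"
  shows "\<exists>j<n. vertex j \<in> C"
proof -
  obtain c where comp: "C \<in> components (path_image g \<inter> {x. p \<bullet> x = c})"
    using C unfolding local_max_sets_def by blast
  obtain t where t: "t \<in> {0..1}" "g t \<in> C"
    using in_components_nonempty[OF comp] in_components_subset[OF comp]
    unfolding path_image_def by blast
  obtain k s where k: "k < n" and s: "0 \<le> s" "s \<le> 1" and "t = (real k + s) / real n"
    using unit_param_on_edge[OF t(1)] by blast
  then have on_C: "g ((real k + s) / real n) \<in> C" using t(2) by simp
  consider "s = 0" | "s = 1" | "0 < s" "s < 1" using s by linarith
  then show ?thesis
  proof cases
    case 1
    then show ?thesis using k on_C by (auto simp: vertex_def)
  next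
    case 2
    then have "vertex ((k + 1) mod n) \<in> C" using on_C edge_end_vertex[OF k] by simp
    moreover have "(k + 1) mod n < n" using n_pos by simp
    ultimately show ?thesis by blast
  next
    case 3
    then have "flat_edge k" using edge_cases local_max_no_ascent[OF C k s on_C] by blast
    then have "edge_arc k \<subseteq> C"
      using edge_arc_in_component[OF comp k] edge_arc_props(5)[OF k s] on_C by blast
    then show ?thesis using edge_arc_props(3)[OF k] k by blast
  qed
qed

lemma local_max_contains_peak_vertex:
  assumes C: "C \<in> local_max_sets (path_image g) p" and nonflat: "\<exists>m<n. \<not> flat_edge m"
  shows "\<exists>i\<in>peak_edges. vertex i \<in> C"
proof -
  obtain c where comp: "C \<in> components (path_image g \<inter> {x. p \<bullet> x = c})"
    using C unfolding local_max_sets_def by blast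
  obtain j where "j < n" "vertex j \<in> C" using local_max_contains_vertex[OF C] by blast
  moreover have "\<not> rising_edge k" if "k < n" "vertex k \<in> C" for k
    using local_max_no_ascent[OF C that(1), of 0] that(2) by (auto simp: vertex_def)
  moreover have "\<not> falling_edge k" if "k < n" "vertex ((k + 1) mod n) \<in> C" for k
    using local_max_no_ascent[OF C that(1), of 1] that(2) edge_end_vertex[OF that(1)] by auto
  ultimately show ?thesis
    using peak_edge_in_invariant_set[of j "\<lambda>k. vertex k \<in> C", OF _ _ nonflat]
      component_flat_edge[OF comp] by blast
qed

lemma local_max_sets_all_flat:
  assumes all_flat: "\<forall>m<n. flat_edge m"
  shows "local_max_sets (path_image g) p \<subseteq> {path_image g}"
proof
  have const: "H k = H 0" if "k < n" for k
    using that
  proof (induction k)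
    case (Suc k)
    then have "flat_edge k" using all_flat by simp
    then show ?case using Suc unfolding flat_edge_def by simp
  qed simp
  have level: "p \<bullet> x = H 0" if x: "x \<in> path_image g" for x
  proof -
    obtain t where "t \<in> {0..1}" "x = g t" using x unfolding path_image_def by blast
    then obtain k s where k: "k < n" and s: "0 \<le> s" "s \<le> 1" and "x = g ((real k + s) / real n)"
      using unit_param_on_edge by metis
    then show ?thesis using height[OF k s] const[of k] const[of "(k + 1) mod n"] n_pos
      by (simp add: algebra_simps)
  qed
  fix C assume "C \<in> local_max_sets (path_image g) p"
  then obtain c where comp: "C \<in> components (path_image g \<inter> {x. p \<bullet> x = c})"
    unfolding local_max_sets_def by blast
  then obtain x where "x \<in> path_image g" "p \<bullet> x = c"
    using in_components_nonempty in_components_subset by blast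
  then have "path_image g \<inter> {x. p \<bullet> x = c} = path_image g" using level by auto
  moreover have "connected (path_image g)"
    using cont by (simp add: connected_path_image path_def)
  ultimately show "C \<in> {path_image g}"
    using comp components_eq_sing_iff by auto
qed

lemma local_max_sets_bound:
  assumes "3 \<le> n" "flat_edge 0"
  shows "finite (local_max_sets (path_image g) p)"
    and "2 * card (local_max_sets (path_image g) p) + 1 \<le> n"
proof -
  let ?M = "local_max_sets (path_image g) p"
  have "finite ?M \<and> (card ?M \<le> 1 \<or> card ?M \<le> card peak_edges)"
  proof (cases "\<forall>m<n. flat_edge m")
    case True
    then have "?M \<subseteq> {path_image g}" by (rule local_max_sets_all_flat)
    then show ?thesis using card_mono[of "{path_image g}" ?M] finite_subset by auto
  next
    case False
    then have "\<forall>C\<in>?M. \<exists>i. i \<in> peak_edges \<and> vertex i \<in> C"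
      using local_max_contains_peak_vertex by blast
    from bchoice[OF this] obtain peak where peak: "\<forall>C\<in>?M. peak C \<in> peak_edges \<and> vertex (peak C) \<in> C"
      by blast
    have "inj_on peak ?M"
    proof (rule inj_onI)
      fix C1 C2 assume "C1 \<in> ?M" "C2 \<in> ?M" "peak C1 = peak C2"
      then show "C1 = C2" using peak local_max_sets_overlap_eq[of C1 _ _ C2] by metis
    qed
    moreover have "peak ` ?M \<subseteq> peak_edges" using peak by blast
    moreover have "finite peak_edges" unfolding peak_edges_def by simp
    ultimately show ?thesis using inj_on_finite card_inj_on_le by blast
  qed
  then show "finite ?M" "2 * card ?M + 1 \<le> n"
    using card_peak_edges[OF assms(2)] assms(1) by auto
qed

end

lemma stick_curve_on_edge:
  assumes k: "k < length vs" and s: "0 \<le> s" "s \<le> 1"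
  shows "stick_curve vs ((real k + s) / real (length vs)) =
         (1 - s) *\<^sub>R vs ! k + s *\<^sub>R vs ! ((k + 1) mod length vs)"
proof -
  define n where "n = length vs"
  have "0 < n" using k unfolding n_def by linarith
  then have u: "(real k + s) / real n * real n = real k + s" by simp
  consider "s < 1" | "s = 1" "k + 1 < n" | "s = 1" "k + 1 = n" using s k unfolding n_def by linarith
  then show ?thesis
  proof cases
    case 1
    then have "\<lfloor>real k + s\<rfloor> = int k" using s by linarith
    then show ?thesis using k unfolding stick_curve_def Let_def n_def[symmetric] u by simp
  next
    case 2
    then have "nat \<lfloor>real k + s\<rfloor> = k + 1" by simp
    then show ?thesis using 2 unfolding stick_curve_def Let_def n_def[symmetric] u by simp
  next
    case 3
    then have "nat \<lfloor>real k + s\<rfloor> = k + 1" "s = 1" "n = Suc k" by simp_all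
    then show ?thesis unfolding stick_curve_def Let_def n_def[symmetric] u by simp
  qed
qed

lemma stick_polygon_length_ge_3:
  assumes sp: "stick_polygon vs"
  shows "3 \<le> length vs"
proof (rule ccontr)
  assume "\<not> 3 \<le> length vs"
  moreover have "0 < length vs" using sp unfolding stick_polygon_def by simp
  ultimately consider "length vs = 1" | "length vs = 2" by linarith
  then show False
  proof cases
    case 1
    then have "edge_vec vs 0 = 0" unfolding edge_vec_def by simp
    then show False using sp 1 unfolding stick_polygon_def by auto
  next
    case 2
    \<comment> \<open>A 2-gon traverses its single segment twice, so its midpoint is a non-transverse double point.\<close>
    have "stick_curve vs (1/4) = (1/2) *\<^sub>R vs ! 0 + (1/2) *\<^sub>R vs ! 1"
      using stick_curve_on_edge[of 0 vs "1/2"] 2 by simp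
    moreover have "stick_curve vs (3/4) = (1/2) *\<^sub>R vs ! 1 + (1/2) *\<^sub>R vs ! 0"
      using stick_curve_on_edge[of 1 vs "1/2"] 2 by simp
    ultimately have "double_pair vs (1/4) (3/4)" unfolding double_pair_def by simp
    moreover have "stick_edge_index vs (1/4) = 0" "stick_edge_index vs (3/4) = 1"
      unfolding stick_edge_index_def 2 by simp_all
    ultimately have "edge_vec vs 0 $ 1 * edge_vec vs 1 $ 2 - edge_vec vs 0 $ 2 * edge_vec vs 1 $ 1 \<noteq> 0"
      using sp unfolding stick_polygon_def Let_def by metis
    then show False unfolding edge_vec_def 2 by (simp add: algebra_simps)
  qed
qed

definition stick_lift :: "(real^2) list \<Rightarrow> (real \<Rightarrow> real) \<Rightarrow> real \<Rightarrow> real^3" where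
  "stick_lift vs z = (\<lambda>t. vector [stick_curve vs t $ 1, stick_curve vs t $ 2, z t])"

lemma represents_stick_lift:
  assumes "represents vs over K"
  obtains z where "simple_path (stick_lift vs z)" "pathfinish (stick_lift vs z) = pathstart (stick_lift vs z)"
    and "same_knot_type K (path_image (stick_lift vs z))"
  using assms unfolding represents_def Let_def stick_lift_def by blast

lemma inner_vector_3: "p \<bullet> (vector [a, b, c] :: real^3) = p $ 1 * a + p $ 2 * b + p $ 3 * c"
  by (simp add: inner_vec_def sum_3)

lemma horizontal_unit_normal:
  fixes d :: "real^2"
  obtains p :: "real^3" where "p \<in> sphere 0 1" "p $ 3 = 0" "p $ 1 * d $ 1 + p $ 2 * d $ 2 = 0"
proof (cases "d = 0")
  case True
  have "norm (vector [1, 0, 0] :: real^3) = 1"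
    by (simp add: norm_eq_sqrt_inner inner_vector_3)
  then show thesis using that[of "vector [1, 0, 0]"] True by simp
next
  case False
  define q :: "real^3" where "q = vector [- d $ 2, d $ 1, 0]"
  have "d $ 1 \<noteq> 0 \<or> d $ 2 \<noteq> 0" using False by (metis exhaust_2 vec_eq_iff zero_index)
  moreover have "q $ 1 = - d $ 2" "q $ 2 = d $ 1" unfolding q_def by simp_all
  ultimately have "q \<noteq> 0" by (metis zero_index neg_equal_0_iff_equal)
  then have "sgn q \<in> sphere 0 1" by (simp add: norm_sgn)
  moreover have "sgn q $ 3 = 0" "sgn q $ 1 * d $ 1 + sgn q $ 2 * d $ 2 = 0"
    unfolding sgn_div_norm q_def by (simp_all add: algebra_simps)
  ultimately show thesis using that by blast
qed

lemma stick_lift_bridge_bound: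
  assumes sp: "stick_polygon vs" and path: "path (stick_lift vs z)"
    and closed: "pathfinish (stick_lift vs z) = pathstart (stick_lift vs z)"
  obtains p where "p \<in> sphere 0 1" "2 * br (path_image (stick_lift vs z)) p + 1 \<le> enat (length vs)"
proof -
  obtain p :: "real^3" where p: "p \<in> sphere 0 1" "p $ 3 = 0"
    and perp: "p $ 1 * edge_vec vs 0 $ 1 + p $ 2 * edge_vec vs 0 $ 2 = 0"
    by (rule horizontal_unit_normal)
  define H where "H k = p $ 1 * vs ! k $ 1 + p $ 2 * vs ! k $ 2" for k
  have n3: "3 \<le> length vs" using sp by (rule stick_polygon_length_ge_3)
  interpret piecewise_linear_height H "length vs" "stick_lift vs z" p
  proof unfold_locales
    show "0 < length vs" using n3 by linarith
    show "continuous_on {0..1} (stick_lift vs z)" using path by (simp add: path_def)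
    show "stick_lift vs z 1 = stick_lift vs z 0"
      using closed by (simp add: pathfinish_def pathstart_def)
    fix k and s :: real assume edge: "k < length vs" "0 \<le> s" "s \<le> 1"
    show "p \<bullet> stick_lift vs z ((real k + s) / real (length vs)) =
        (1 - s) * H k + s * H ((k + 1) mod length vs)"
      using p(2) unfolding stick_lift_def H_def inner_vector_3 stick_curve_on_edge[OF edge]
      by (simp add: algebra_simps)
  qed
  have "flat_edge 0"
    using perp n3 unfolding flat_edge_def H_def edge_vec_def by (simp add: algebra_simps)
  then have "2 * card (local_max_sets (path_image (stick_lift vs z)) p) + 1 \<le> length vs"
    and "finite (local_max_sets (path_image (stick_lift vs z)) p)"
    using local_max_sets_bound[OF n3] by auto
  then have "2 * br (path_image (stick_lift vs z)) p + 1 \<le> enat (length vs)"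
    unfolding br_def by (simp add: one_enat_def numeral_eq_enat)
  with p(1) show thesis using that by blast
qed

theorem theorem2p4:
  fixes K :: "(real^3) set"
  assumes "is_knot K"
  shows "2 * bridge_index K + 1 \<le> planar_stick_index K"
  unfolding planar_stick_index_def
proof (rule INF_greatest)
  fix n assume "n \<in> {n. \<exists>vs over. length vs = n \<and> stick_polygon vs \<and> crossing_info vs over
                          \<and> represents vs over K}"
  then obtain vs over where vs: "length vs = n" "stick_polygon vs" "represents vs over K" by blast
  obtain z where path: "simple_path (stick_lift vs z)"
    and closed: "pathfinish (stick_lift vs z) = pathstart (stick_lift vs z)"
    and knot: "same_knot_type K (path_image (stick_lift vs z))"
    using represents_stick_lift[OF vs(3)] .
  obtain p where p: "p \<in> sphere 0 1"
    and bound: "2 * br (path_image (stick_lift vs z)) p + 1 \<le> enat n"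
    using stick_lift_bridge_bound[OF vs(2) simple_path_imp_path[OF path] closed] vs(1) by metis
  have "bridge_index K \<le> (INF q\<in>sphere 0 1. br (path_image (stick_lift vs z)) q)"
    unfolding bridge_index_def using knot by (intro INF_lower) simp
  also have "\<dots> \<le> br (path_image (stick_lift vs z)) p" using p by (rule INF_lower)
  finally have "2 * bridge_index K + 1 \<le> 2 * br (path_image (stick_lift vs z)) p + 1"
    by (intro add_right_mono mult_left_mono) auto
  with bound show "2 * bridge_index K + 1 \<le> enat n" by order
qed

end
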